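(* Consider progressive filtering with an ensemble of $M$ selection strategies $s_1,\dots,s_M$, $J$ batches per strategy per round, sampling ratio $\alpha\in(0,1)$ and batch size $b$. Let $r\ge 1$ be a round, let $\mathbf{x}\in\mathcal{C}_{r-1}$, and for each $m\in\{1,\dots,M\}$ let $p_{m,r}(\mathbf{x})$ be the probability that strategy $s_m$ includes $\mathbf{x}$ in a selected batch during round $r$, given that $\mathbf{x}$ is present in the random subsample. Then the probability that $\mathbf{x}$ survives round $r$, $P_r(\mathbf{x})=\Pr(\mathbf{x}\in\mathcal{C}_r\mid \mathbf{x}\in\mathcal{C}_{r-1})$, satisfies $$P_r(\mathbf{x})\ \ge\ 1-\Big(1-\alpha\cdot\max_{m\in\{1,\dots,M\}} p_{m,r}(\mathbf{x})\Big)^J.$$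
   Context: Setting (pool-based batch active learning). $\mathcal{U}_t$ is a finite unlabeled pool. A selection strategy $s$ is a (possibly randomized) map taking a finite set $\mathcal{P}$ of instances and a batch size $b$ to a subset $s(\mathcal{P},b)\subseteq\mathcal{P}$ of size $b$. Progressive filtering with strategies $s_1,\dots,s_M$, number of rounds $R$, number of batches per strategy $J$, and sampling ratio $\alpha\in(0,1)$ produces pools $\mathcal{C}_0=\mathcal{U}_t\supseteq \mathcal{C}_1\supseteq\dots\supseteq\mathcal{C}_R$ by $$\mathcal{C}_r=\bigcup_{m=1}^M\bigcup_{j=1}^J s_m\big(\mathrm{SubSample}(\mathcal{C}_{r-1},\alpha|\mathcal{C}_{r-1}|),\,b\big),$$ where each $\mathrm{SubSample}(\mathcal{C},n)$ draws $n$ instances of $\mathcal{C}$ uniformly at random without replacement, a fresh independent subsample being drawn for each of the $M\cdot J$ pairs $(m,j)$ in each round, so that each fixed instance of $\mathcal{C}_{r-1}$ lies in a given subsample with probability $\alpha$, and the $M\cdot J$ draws of a round are independent. *)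

theory Defs
  imports "HOL-Probability.Probability"
begin

text \<open>A selection strategy of the ensemble: strategy index m, pool P, batch size b,
  returns a (possibly randomized) batch, i.e. a distribution over subsets of P.\<close>
type_synonym 'a strategies = "nat \<Rightarrow> 'a set \<Rightarrow> nat \<Rightarrow> 'a set pmf"

definition subsamples :: "'a set \<Rightarrow> nat \<Rightarrow> 'a set set" where
  "subsamples C n = {S. S \<subseteq> C \<and> card S = n}"

definition SubSample :: "'a set \<Rightarrow> nat \<Rightarrow> 'a set pmf" where
  "SubSample C n = pmf_of_set (subsamples C n)"

definition batch_exp :: "'a strategies \<Rightarrow> nat \<Rightarrow> 'a set \<Rightarrow> nat \<Rightarrow> nat \<Rightarrow> ('a set \<times> 'a set) pmf" where
  "batch_exp s m C n b = SubSample C n \<bind> (\<lambda>S. map_pmf (\<lambda>T. (S, T)) (s m S b))"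

definition pairs :: "nat \<Rightarrow> nat \<Rightarrow> (nat \<times> nat) set" where
  "pairs M J = {1..M} \<times> {1..J}"

definition next_pool :: "'a strategies \<Rightarrow> nat \<Rightarrow> nat \<Rightarrow> 'a set \<Rightarrow> nat \<Rightarrow> nat \<Rightarrow> 'a set pmf" where
  "next_pool s M J C n b =
     map_pmf (\<lambda>\<omega>. \<Union>i\<in>pairs M J. \<omega> i)
       (Pi_pmf (pairs M J) {} (\<lambda>(m,j). map_pmf snd (batch_exp s m C n b)))"

definition incl_prob :: "'a strategies \<Rightarrow> nat \<Rightarrow> 'a set \<Rightarrow> nat \<Rightarrow> nat \<Rightarrow> 'a \<Rightarrow> real" where
  "incl_prob s m C n b x =
     measure_pmf.prob (batch_exp s m C n b) {(S,T). x \<in> S \<and> x \<in> T}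
     / measure_pmf.prob (batch_exp s m C n b) {(S,T). x \<in> S}"

end

theory Submission
  imports Defs
begin

text \<open>
  A fixed instance x survives the round unless each of the M J independent experiments misses
  it, so the probability that x is discarded is the product over all pairs (m,j) of
  1 - q_m, where q_m is the unconditional probability that strategy m selects x.  Because
  a batch lies inside its subsample and x lies in the subsample with probability \<alpha>,
  q_m = \<alpha> p_m.  Bounding every factor except those of a maximising strategy by 1 leaves
  (1 - \<alpha> max_m p_m)^J.
\<close>

definition select_prob :: "'a strategies \<Rightarrow> nat \<Rightarrow> 'a set \<Rightarrow> nat \<Rightarrow> nat \<Rightarrow> 'a \<Rightarrow> real" where
  "select_prob s m C n b x = measure_pmf.prob (map_pmf snd (batch_exp s m C n b)) {T. x \<in> T}"

lemma prod_le_prod_subset: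
  fixes f :: "'a \<Rightarrow> 'b :: linordered_idom"
  assumes "finite B" "A \<subseteq> B" "\<And>i. i \<in> B \<Longrightarrow> 0 \<le> f i \<and> f i \<le> 1"
  shows "prod f B \<le> prod f A"
proof -
  have "prod f B = prod f A * prod f (B - A)"
    using prod.subset_diff[OF assms(2,1)] by (simp add: mult.commute)
  also have "\<dots> \<le> prod f A * 1"
    using assms by (intro mult_left_mono prod_le_1 prod_nonneg) auto
  finally show ?thesis by simp
qed

lemma finite_subsamples: "finite C \<Longrightarrow> finite (subsamples C n)"
  unfolding subsamples_def by simp

lemma card_subsamples: "finite C \<Longrightarrow> card (subsamples C n) = card C choose n"
  unfolding subsamples_def by (rule n_subsets)

lemma subsamples_nonempty: "finite C \<Longrightarrow> n \<le> card C \<Longrightarrow> subsamples C n \<noteq> {}"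
  using card_subsamples[of C n] by (metis card.empty zero_less_binomial_iff less_irrefl)

lemma set_pmf_SubSample:
  "finite C \<Longrightarrow> n \<le> card C \<Longrightarrow> set_pmf (SubSample C n) = subsamples C n"
  unfolding SubSample_def by (simp add: finite_subsamples subsamples_nonempty)

lemma subsamples_containing:
  assumes "finite C" "x \<in> C" "0 < n"
  shows "subsamples C n \<inter> {S. x \<in> S} = insert x ` subsamples (C - {x}) (n - 1)"
proof (intro equalityI subsetI)
  fix S assume S: "S \<in> subsamples C n \<inter> {S. x \<in> S}"
  then have "S - {x} \<in> subsamples (C - {x}) (n - 1)"
    using assms(1) by (auto simp: subsamples_def intro: finite_subset)
  moreover have "S = insert x (S - {x})" using S by auto
  ultimately show "S \<in> insert x ` subsamples (C - {x}) (n - 1)" by blast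
next
  fix S assume "S \<in> insert x ` subsamples (C - {x}) (n - 1)"
  then obtain S' where S': "S' \<subseteq> C - {x}" "card S' = n - 1" "S = insert x S'"
    unfolding subsamples_def by auto
  moreover have "finite S'" "x \<notin> S'"
    using S'(1) assms(1) finite_subset by auto
  ultimately show "S \<in> subsamples C n \<inter> {S. x \<in> S}"
    using assms by (auto simp: subsamples_def)
qed

lemma prob_mem_SubSample:
  assumes "finite C" "x \<in> C" "0 < n" "n \<le> card C"
  shows "measure_pmf.prob (SubSample C n) {S. x \<in> S} = real n / real (card C)"
proof -
  have "inj_on (insert x) (subsamples (C - {x}) (n - 1))"
    unfolding subsamples_def inj_on_def by auto
  then have hits: "card (subsamples C n \<inter> {S. x \<in> S}) = (card C - 1) choose (n - 1)"
    using assms by (simp add: subsamples_containing card_image card_subsamples)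
  have "real n * real (card C choose n) = real (card C) * real ((card C - 1) choose (n - 1))"
    using times_binomial_minus1_eq[OF assms(3)] by (metis of_nat_mult)
  moreover have "card C choose n > 0" "card C > 0" using assms by auto
  ultimately have "real (card (subsamples C n \<inter> {S. x \<in> S})) / real (card (subsamples C n))
                      = real n / real (card C)"
    using assms(1,2) by (simp add: hits card_subsamples field_simps) blast
  then show ?thesis
    unfolding SubSample_def
    using measure_pmf_of_set[OF subsamples_nonempty[OF assms(1,4)] finite_subsamples[OF assms(1)]]
    by simp
qed

lemma map_fst_batch_exp: "map_pmf fst (batch_exp s m C n b) = SubSample C n"
  unfolding batch_exp_def
  by (simp add: map_bind_pmf pmf.map_comp o_def map_pmf_const bind_return_pmf')

lemma incl_prob_eq_select_prob:
  assumes "\<And>P. P \<in> set_pmf (SubSample C n) \<Longrightarrow> set_pmf (s m P b) \<subseteq> Pow P"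
  shows "incl_prob s m C n b x
           = select_prob s m C n b x / measure_pmf.prob (SubSample C n) {S. x \<in> S}"
proof -
  let ?B = "batch_exp s m C n b"
  have batch_in_subsample: "T \<subseteq> S" if "(S, T) \<in> set_pmf ?B" for S T
    using that assms unfolding batch_exp_def by auto
  then have "{(S,T). x \<in> S \<and> x \<in> T} \<inter> set_pmf ?B = snd -` {T. x \<in> T} \<inter> set_pmf ?B"
    by (auto intro: batch_in_subsample[THEN subsetD])
  then have "measure_pmf.prob ?B {(S,T). x \<in> S \<and> x \<in> T} = select_prob s m C n b x"
    unfolding select_prob_def measure_map_pmf by (metis measure_Int_set_pmf)
  moreover have "measure_pmf.prob ?B {(S,T). x \<in> S}
                   = measure_pmf.prob (SubSample C n) {S. x \<in> S}"
  proof -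
    have "{(S,T). x \<in> S} = fst -` {S. x \<in> S}" by auto
    then show ?thesis
      by (metis map_fst_batch_exp measure_map_pmf)
  qed
  ultimately show ?thesis
    unfolding incl_prob_def by simp
qed

lemma prob_not_mem_Union_Pi_pmf:
  assumes "finite A"
  shows "measure_pmf.prob (map_pmf (\<lambda>\<omega>. \<Union>i\<in>A. \<omega> i) (Pi_pmf A {} p)) {U. x \<notin> U}
           = (\<Prod>i\<in>A. measure_pmf.prob (p i) {T. x \<notin> T})"
proof -
  let ?P = "Pi_pmf A {} p"
  have "{\<omega>. x \<notin> (\<Union>i\<in>A. \<omega> i)} \<inter> set_pmf ?P = PiE_dflt A {} (\<lambda>_. {T. x \<notin> T}) \<inter> set_pmf ?P"
    using set_Pi_pmf_subset[OF assms, of "{}" p] unfolding PiE_dflt_def by auto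
  then have "measure_pmf.prob ?P {\<omega>. x \<notin> (\<Union>i\<in>A. \<omega> i)}
               = measure_pmf.prob ?P (PiE_dflt A {} (\<lambda>_. {T. x \<notin> T}))"
    by (metis measure_Int_set_pmf)
  also have "\<dots> = (\<Prod>i\<in>A. measure_pmf.prob (p i) {T. x \<notin> T})"
    by (rule measure_Pi_pmf_PiE_dflt[OF assms])
  finally show ?thesis
    by (simp add: vimage_def)
qed

lemma prob_mem_next_pool:
  "measure_pmf.prob (next_pool s M J C n b) {C'. x \<in> C'}
     = 1 - (\<Prod>(m,j)\<in>pairs M J. 1 - select_prob s m C n b x)"
proof -
  let ?D = "\<lambda>(m,j). map_pmf snd (batch_exp s m C n b)"
  have fin: "finite (pairs M J)" unfolding pairs_def by simp
  have miss: "measure_pmf.prob (?D i) {T. x \<notin> T}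
               = (case i of (m,j) \<Rightarrow> 1 - select_prob s m C n b x)" for i
    using measure_pmf.prob_compl[of "{T. x \<in> T}" "?D i"]
    by (auto simp: select_prob_def Compl_eq_Diff_UNIV[symmetric] Collect_neg_eq split: prod.split)
  have "measure_pmf.prob (next_pool s M J C n b) {C'. x \<in> C'}
          = 1 - measure_pmf.prob (next_pool s M J C n b) {C'. x \<notin> C'}"
    using measure_pmf.prob_compl[of "{C'. x \<in> C'}" "next_pool s M J C n b"]
    by (simp add: Compl_eq_Diff_UNIV[symmetric] Collect_neg_eq)
  then show ?thesis
    unfolding next_pool_def prob_not_mem_Union_Pi_pmf[OF fin] miss by simp
qed

theorem theorem1:
  fixes s :: "'a strategies" and M J b n :: nat and \<alpha> :: real
    and C :: "'a set" and x :: 'a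
  assumes "M \<ge> 1"
    and "0 < \<alpha>" and "\<alpha> < 1"
    and "finite C" and "x \<in> C"
    and "real n = \<alpha> * real (card C)"
    and "\<And>m P. m \<in> {1..M} \<Longrightarrow> P \<subseteq> C \<Longrightarrow> card P = n \<Longrightarrow>
           set_pmf (s m P b) \<subseteq> {T. T \<subseteq> P \<and> card T = b}"
  shows "measure_pmf.prob (next_pool s M J C n b) {C'. x \<in> C'}
           \<ge> 1 - (1 - \<alpha> * Max ((\<lambda>m. incl_prob s m C n b x) ` {1..M})) ^ J"
proof -
  have "card C > 0" using assms(4,5) card_gt_0_iff by blast
  moreover have "real n > 0" "real n \<le> real (card C)"
    using assms(2,3,6) \<open>card C > 0\<close> by simp_all
  ultimately have n_pos: "0 < n" and n_le: "n \<le> card C"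
    by simp_all
  have subsampled: "measure_pmf.prob (SubSample C n) {S. x \<in> S} = \<alpha>"
    using prob_mem_SubSample[OF assms(4,5) n_pos n_le] assms(6) \<open>card C > 0\<close> by simp
  have batch_within: "set_pmf (s m P b) \<subseteq> Pow P"
    if "m \<in> {1..M}" "P \<in> set_pmf (SubSample C n)" for m P
    using that assms(7)[of m P] by (auto simp: set_pmf_SubSample[OF assms(4) n_le] subsamples_def)
  let ?p = "\<lambda>m. incl_prob s m C n b x"
  have "Max (?p ` {1..M}) \<in> ?p ` {1..M}"
    using assms(1) by (intro Max_in) auto
  then obtain m0 where m0: "m0 \<in> {1..M}" and max_m0: "Max (?p ` {1..M}) = ?p m0"
    by blast
  have alpha_max: "\<alpha> * Max (?p ` {1..M}) = select_prob s m0 C n b x"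
    using incl_prob_eq_select_prob[of C n s m0 b x, OF batch_within[OF m0]] subsampled assms(2)
    unfolding max_m0 by simp
  have "(\<Prod>(m,j)\<in>pairs M J. 1 - select_prob s m C n b x)
          \<le> (\<Prod>(m,j)\<in>{m0} \<times> {1..J}. 1 - select_prob s m C n b x)"
    using m0 by (intro prod_le_prod_subset) (auto simp: pairs_def select_prob_def)
  also have "\<dots> = (1 - select_prob s m0 C n b x) ^ J"
    by (simp add: prod.cartesian_product[symmetric])
  finally show ?thesis
    unfolding prob_mem_next_pool alpha_max by linarith
qed

end
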